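(* Let $J=JCK(Z,\delta)$. Then $\dim_{\mathbb F}\mathrm{Inder}(J)=\dim_{\mathbb F}J=8\dim_{\mathbb F}Z$ (dimensions as cardinals).
   Context: Let $\mathbb F$ be a field of characteristic $\neq 2$, $Z$ a unital commutative associative $\mathbb F$-algebra, and $\delta$ a derivation of $Z$ such that $Z\delta(Z)=Z$ (the $\mathbb F$-span of all products $f\delta(g)$, $f,g\in Z$, is $Z$). The Cheng-Kac Jordan superalgebra $J=JCK(Z,\delta)=J_{\bar0}\oplus J_{\bar1}$ is defined as follows: $J_{\bar0}=Z1\oplus Zw_1\oplus Zw_2\oplus Zw_3$ and $J_{\bar1}=Zx\oplus Zx_1\oplus Zx_2\oplus Zx_3$ are free $Z$-modules of rank 4; $J_{\bar0}$ is the $Z$-algebra $(\mathbb F1\oplus\mathbb Fw_1\oplus\mathbb Fw_2\oplus\mathbb Fw_3)\otimes_{\mathbb F}Z$ with $1$ the identity, $w_1^2=w_2^2=1$, $w_3^2=-1$, $w_iw_j=0$ for $i\ne j$. For $f,g\in Z$ and $i,j\in\{1,2,3\}$ the remaining products are: $f(gx)=(fg)x$, $f(gx_j)=(fg)x_j$, $(fw_i)(gx)=(\delta(f)g)x_i$, $(fw_i)(gx_j)=-(fg)x_{i\times j}$, $(fx)(gx)=\delta(f)g-f\delta(g)$, $(fx)(gx_j)=-(fg)w_j$, $(fx_i)(gx)=(fg)w_i$, $(fx_i)(gx_j)=0$, extended by supercommutativity ($ab=(-1)^{|a||b|}ba$), where $x_{1\times2}=-x_{2\times1}=x_3$, $x_{1\times3}=-x_{3\times1}=x_2$,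 $x_{3\times2}=-x_{2\times3}=x_1$, $x_{i\times i}=0$. $D(a,b)$ is the map $c\mapsto a(bc)-(-1)^{|a||b|}b(ac)$, and $\mathrm{Inder}(J)$ is the span of all $D(a,b)$, $a,b\in J$ homogeneous. *)

theory Defs
  imports Complex_Main "HOL-Library.Function_Algebras" "HOL-Library.Equipollence"
begin

text \<open>Basis of JCK(Z,delta) as a free Z-module of rank 8:
  E1 = 1, W1 W2 W3 (even), X X1 X2 X3 (odd).  An element of J is its
  coefficient function idx => Z.\<close>

datatype idx = E1 | W1 | W2 | W3 | X | X1 | X2 | X3

definition idxs :: "idx set" where
  "idxs = {E1, W1, W2, W3, X, X1, X2, X3}"

definition odd_idx :: "idx \<Rightarrow> bool" where
  "odd_idx k \<longleftrightarrow> k \<in> {X, X1, X2, X3}"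

definition sv :: "idx \<Rightarrow> 'z::zero \<Rightarrow> idx \<Rightarrow> 'z" where
  "sv k z = (\<lambda>j. if j = k then z else 0)"

text \<open>bp d p f q g = (f e_p)(g e_q), as a coefficient vector.\<close>
fun bp :: "('z::comm_ring_1 \<Rightarrow> 'z) \<Rightarrow> idx \<Rightarrow> 'z \<Rightarrow> idx \<Rightarrow> 'z \<Rightarrow> idx \<Rightarrow> 'z" where
  "bp d E1 f q g = sv q (f * g)"
| "bp d p f E1 g = sv p (f * g)"
| "bp d W1 f W1 g = sv E1 (f * g)"
| "bp d W2 f W2 g = sv E1 (f * g)"
| "bp d W3 f W3 g = sv E1 (- (f * g))"
| "bp d W1 f X g = sv X1 (d f * g)"
| "bp d W2 f X g = sv X2 (d f * g)"
| "bp d W3 f X g = sv X3 (d f * g)"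
| "bp d X f W1 g = sv X1 (d g * f)"
| "bp d X f W2 g = sv X2 (d g * f)"
| "bp d X f W3 g = sv X3 (d g * f)"
| "bp d W1 f X2 g = sv X3 (- (f * g))"
| "bp d W2 f X1 g = sv X3 (f * g)"
| "bp d W1 f X3 g = sv X2 (- (f * g))"
| "bp d W3 f X1 g = sv X2 (f * g)"
| "bp d W3 f X2 g = sv X1 (- (f * g))"
| "bp d W2 f X3 g = sv X1 (f * g)"
| "bp d X2 f W1 g = sv X3 (- (f * g))"
| "bp d X1 f W2 g = sv X3 (f * g)"
| "bp d X3 f W1 g = sv X2 (- (f * g))"
| "bp d X1 f W3 g = sv X2 (f * g)"
| "bp d X2 f W3 g = sv X1 (- (f * g))"
| "bp d X3 f W2 g = sv X1 (f * g)"
| "bp d X f X g = sv E1 (d f * g - f * d g)"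
| "bp d X f X1 g = sv W1 (- (f * g))"
| "bp d X f X2 g = sv W2 (- (f * g))"
| "bp d X f X3 g = sv W3 (- (f * g))"
| "bp d X1 f X g = sv W1 (f * g)"
| "bp d X2 f X g = sv W2 (f * g)"
| "bp d X3 f X g = sv W3 (f * g)"
| "bp d p f q g = (\<lambda>_. 0)"

definition jmult :: "('z::comm_ring_1 \<Rightarrow> 'z) \<Rightarrow> (idx \<Rightarrow> 'z) \<Rightarrow> (idx \<Rightarrow> 'z) \<Rightarrow> (idx \<Rightarrow> 'z)" where
  "jmult d a c = (\<lambda>k. \<Sum>p\<in>idxs. \<Sum>q\<in>idxs. bp d p (a p) q (c q) k)"

definition is_even_el :: "(idx \<Rightarrow> 'z::zero) \<Rightarrow> bool" where
  "is_even_el a \<longleftrightarrow> (\<forall>k. odd_idx k \<longrightarrow> a k = 0)"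

definition is_odd_el :: "(idx \<Rightarrow> 'z::zero) \<Rightarrow> bool" where
  "is_odd_el a \<longleftrightarrow> (\<forall>k. \<not> odd_idx k \<longrightarrow> a k = 0)"

definition homog :: "(idx \<Rightarrow> 'z::zero) \<Rightarrow> bool" where
  "homog a \<longleftrightarrow> is_even_el a \<or> is_odd_el a"

text \<open>D(a,b)(c) = a(bc) - (-1)^{|a||b|} b(ac).  (For a = 0 or b = 0 the
  choice of parity is irrelevant since D vanishes.)\<close>
definition Dop :: "('z::comm_ring_1 \<Rightarrow> 'z) \<Rightarrow> (idx \<Rightarrow> 'z) \<Rightarrow> (idx \<Rightarrow> 'z) \<Rightarrow> (idx \<Rightarrow> 'z) \<Rightarrow> (idx \<Rightarrow> 'z)" where
  "Dop d a b = (\<lambda>c. if is_odd_el a \<and> is_odd_el b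
                     then jmult d a (jmult d b c) + jmult d b (jmult d a c)
                     else jmult d a (jmult d b c) - jmult d b (jmult d a c))"

definition scJ :: "('a \<Rightarrow> 'z \<Rightarrow> 'z) \<Rightarrow> 'a \<Rightarrow> (idx \<Rightarrow> 'z) \<Rightarrow> (idx \<Rightarrow> 'z)" where
  "scJ s c v = (\<lambda>k. s c (v k))"

definition scE :: "('a \<Rightarrow> 'z \<Rightarrow> 'z) \<Rightarrow> 'a \<Rightarrow> ((idx \<Rightarrow> 'z) \<Rightarrow> (idx \<Rightarrow> 'z))
                    \<Rightarrow> ((idx \<Rightarrow> 'z) \<Rightarrow> (idx \<Rightarrow> 'z))" where
  "scE s c \<phi> = (\<lambda>v. scJ s c (\<phi> v))"

definition Inder :: "('a::field \<Rightarrow> 'z::comm_ring_1 \<Rightarrow> 'z) \<Rightarrow> ('z \<Rightarrow> 'z)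
                     \<Rightarrow> ((idx \<Rightarrow> 'z) \<Rightarrow> (idx \<Rightarrow> 'z)) set" where
  "Inder s d = module.span (scE s) {Dop d a b | a b. homog a \<and> homog b}"

definition is_basis_of :: "('a::field \<Rightarrow> 'v::ab_group_add \<Rightarrow> 'v) \<Rightarrow> 'v set \<Rightarrow> 'v set \<Rightarrow> bool" where
  "is_basis_of s V B \<longleftrightarrow> B \<subseteq> V \<and> \<not> module.dependent s B \<and> module.span s B = V"

end

theory Submission
  imports Defs "HOL-Algebra.Free_Abelian_Groups"
begin

(* For every basis index k of J and u in Z we fix one "normal generator"
   Dgen k u = D(u e_p, e_q) (a suitable pair p, q of basis elements), and put
   Phi(v) = sum_k Dgen k (v_k), an F-linear map J -> End(J).  Hence the range of Phi is exactly Inder(J).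
   (4) Phi is injective: evaluating Phi(v) on basis elements isolates each coefficient;
       for the coefficient of 1 one gets 2 v_1 delta(Z) = 0, so v_1 = 0 since char F <> 2
       and Z delta(Z) = Z.
   (5) The sets {c e_k | c in C} for an F-basis C of Z form an F-basis of J.
   The theorem then follows by comparing the bases B, Phi(BJ), BJ and {c e_k}. *)

section \<open>Independent sets with equal spans are equipotent\<close>

context vector_space begin

lemma in_span_finite_subset:
  assumes "a \<in> span S" shows "\<exists>T. finite T \<and> T \<subseteq> S \<and> a \<in> span T"
proof -
  obtain t r where t: "a = (\<Sum>x\<in>t. r x *s x)" "finite t" "t \<subseteq> S"
    using assms unfolding span_explicit by blast
  have "a \<in> span t" unfolding t(1) by (intro span_sum span_scale span_base)
  with t show ?thesis by blast
qed

text \<open>In the infinite case, \<open>A\<close> is covered by the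
  finite sets \<open>A \<inter> span T\<close>, \<open>T\<close> a finite subset of \<open>S\<close>.\<close>
lemma indep_lepoll_span:
  assumes ind: "independent A" and sub: "A \<subseteq> span S"
  shows "A \<lesssim> S"
proof (cases "finite S")
  case True
  have "finite A \<and> card A \<le> card S" by (rule independent_span_bound[OF True ind sub])
  with True show ?thesis by (simp add: lepoll_iff_card_le)
next
  case False
  have cover: "A \<subseteq> (\<Union>T\<in>Fpow S. A \<inter> span T)"
  proof
    fix a assume "a \<in> A"
    with sub have "a \<in> span S" by blast
    then obtain T where T: "finite T" "T \<subseteq> S" "a \<in> span T"
      using in_span_finite_subset by blast
    then have "T \<in> Fpow S" by (simp add: Fpow_def)
    with T(3) \<open>a \<in> A\<close> show "a \<in> (\<Union>T\<in>Fpow S. A \<inter> span T)" by blast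
  qed
  have pieces: "\<forall>T\<in>Fpow S. |A \<inter> span T| \<le>o |S|"
  proof
    fix T assume "T \<in> Fpow S"
    then have "finite T" by (simp add: Fpow_def)
    moreover have "independent (A \<inter> span T)" using ind by (rule independent_mono) simp
    ultimately have "finite (A \<inter> span T)" using independent_span_bound by simp
    then show "|A \<inter> span T| \<le>o |S|" using False by (rule ordLeq3_finite_infinite)
  qed
  have "|Fpow S| \<le>o |S|"
    using eqpoll_Fpow[OF False] by (simp add: eqpoll_iff_card_of_ordIso ordIso_iff_ordLeq)
  then have "|\<Union>T\<in>Fpow S. A \<inter> span T| \<le>o |S|"
    by (rule card_of_UNION_ordLeq_infinite[OF False _ pieces])
  with card_of_mono1[OF cover] have "|A| \<le>o |S|" by (rule ordLeq_transitive)
  then show ?thesis unfolding lepoll_def card_of_ordLeq[symmetric] by blast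
qed

lemma independent_same_span_eqpoll:
  assumes "independent A" "independent A'" "span A = span A'"
  shows "A \<approx> A'"
proof (rule lepoll_antisym)
  show "A \<lesssim> A'" using assms span_superset indep_lepoll_span by metis
  show "A' \<lesssim> A" using assms span_superset indep_lepoll_span by metis
qed

lemma double_eq_0_imp:
  fixes x :: 'b assumes "(2::'a) \<noteq> 0" "x + x = 0" shows "x = 0"
proof -
  have "x = inverse 2 *s (2 *s x)" using assms(1) by simp
  also have "2 *s x = x + x" using scale_left_distrib[of 1 1 x] by simp
  finally show ?thesis using assms(2) by simp
qed

end

lemma in_idxs [simp]: "p \<in> idxs" by (cases p) (auto simp: idxs_def)

lemma finite_idxs [simp]: "finite idxs" by (simp add: idxs_def)

lemma sv_apply [simp]: "sv k z j = (if j = k then z else 0)" by (simp add: sv_def)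

lemma sv_0 [simp]: "sv k 0 = 0" by (simp add: fun_eq_iff)

lemma sv_add: "sv k ((x::'z::monoid_add) + y) = sv k x + sv k y" by (simp add: fun_eq_iff)

lemma sum_fun_apply: "(\<Sum>r\<in>S. f r) x = (\<Sum>r\<in>S. f r x)"
  by (induction S rule: infinite_finite_induct) auto

lemma sv_decomposition: "c = (\<Sum>r\<in>idxs. sv r (c r))"
  by (simp add: fun_eq_iff sum_fun_apply)

lemma idx_fun_eqI:
  "f E1 = g E1 \<Longrightarrow> f W1 = g W1 \<Longrightarrow> f W2 = g W2 \<Longrightarrow> f W3 = g W3 \<Longrightarrow>
   f X = g X \<Longrightarrow> f X1 = g X1 \<Longrightarrow> f X2 = g X2 \<Longrightarrow> f X3 = g X3 \<Longrightarrow> f = g"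
  by (rule ext, case_tac x) auto

lemma additive_eq_on_sv:
  fixes A A' :: "(idx \<Rightarrow> 'z::comm_ring_1) \<Rightarrow> 'v::ab_group_add"
  assumes "additive A" "additive A'" "\<And>r h. A (sv r h) = A' (sv r h)"
  shows "A = A'"
proof
  fix c
  interpret a: additive A by (rule assms(1))
  interpret a': additive A' by (rule assms(2))
  have "A c = A (\<Sum>r\<in>idxs. sv r (c r))" by (subst sv_decomposition[of c]) simp
  also have "\<dots> = A' (\<Sum>r\<in>idxs. sv r (c r))" by (simp add: a.sum a'.sum assms(3))
  also have "\<dots> = A' c" by (subst sv_decomposition[of c]) simp
  finally show "A c = A' c" .
qed

lemma biadditive_expand:
  fixes F :: "(idx \<Rightarrow> 'z::comm_ring_1) \<Rightarrow> (idx \<Rightarrow> 'z) \<Rightarrow> 'v::ab_group_add"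
  assumes "\<And>b. additive (\<lambda>a. F a b)" "\<And>a. additive (F a)"
  shows "F a b = (\<Sum>p\<in>idxs. \<Sum>q\<in>idxs. F (sv p (a p)) (sv q (b q)))"
proof -
  interpret left: additive "\<lambda>a. F a b" by (rule assms(1))
  have "F a b = (\<Sum>p\<in>idxs. F (sv p (a p)) b)"
    by (subst sv_decomposition[of a]) (rule left.sum)
  also have "\<dots> = (\<Sum>p\<in>idxs. \<Sum>q\<in>idxs. F (sv p (a p)) (sv q (b q)))"
  proof (rule sum.cong[OF refl])
    fix p
    interpret right: additive "F (sv p (a p))" by (rule assms(2))
    show "F (sv p (a p)) b = (\<Sum>q\<in>idxs. F (sv p (a p)) (sv q (b q)))"
      by (subst sv_decomposition[of b]) (rule right.sum)
  qed
  finally show ?thesis .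
qed

section \<open>Operators \<open>D(a,b)\<close> and the normal generators\<close>

definition Dm :: "('z::comm_ring_1 \<Rightarrow> 'z) \<Rightarrow> (idx \<Rightarrow> 'z) \<Rightarrow> (idx \<Rightarrow> 'z) \<Rightarrow> (idx \<Rightarrow> 'z) \<Rightarrow> (idx \<Rightarrow> 'z)"
  where "Dm d a b = (\<lambda>c. jmult d a (jmult d b c) - jmult d b (jmult d a c))"

definition Dp :: "('z::comm_ring_1 \<Rightarrow> 'z) \<Rightarrow> (idx \<Rightarrow> 'z) \<Rightarrow> (idx \<Rightarrow> 'z) \<Rightarrow> (idx \<Rightarrow> 'z) \<Rightarrow> (idx \<Rightarrow> 'z)"
  where "Dp d a b = (\<lambda>c. jmult d a (jmult d b c) + jmult d b (jmult d a c))"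

lemma Dop_eq: "Dop d a b = (if is_odd_el a \<and> is_odd_el b then Dp d a b else Dm d a b)"
  unfolding Dop_def Dp_def Dm_def by (auto simp: fun_eq_iff)

definition Dpar :: "('z::comm_ring_1 \<Rightarrow> 'z) \<Rightarrow> idx \<Rightarrow> idx \<Rightarrow> (idx \<Rightarrow> 'z) \<Rightarrow> (idx \<Rightarrow> 'z) \<Rightarrow> (idx \<Rightarrow> 'z) \<Rightarrow> (idx \<Rightarrow> 'z)"
  where "Dpar d p q = (if odd_idx p \<and> odd_idx q then Dp d else Dm d)"

fun gen_pair :: "idx \<Rightarrow> idx \<times> idx" where
  "gen_pair E1 = (X, X)" | "gen_pair W1 = (X, X1)" | "gen_pair W2 = (X, X2)" | "gen_pair W3 = (X, X3)"
| "gen_pair X = (W1, X1)" | "gen_pair X1 = (W1, X)" | "gen_pair X2 = (W2, X)" | "gen_pair X3 = (W3, X)"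

definition Dgen :: "('z::comm_ring_1 \<Rightarrow> 'z) \<Rightarrow> idx \<Rightarrow> 'z \<Rightarrow> (idx \<Rightarrow> 'z) \<Rightarrow> (idx \<Rightarrow> 'z)"
  where "Dgen d k u = (case gen_pair k of (p, q) \<Rightarrow> Dpar d p q (sv p u) (sv q 1))"

text \<open>Index and coefficient of the normal generator equal to \<open>D(f e_p, g e_q)\<close>.\<close>
fun tg :: "idx \<Rightarrow> idx \<Rightarrow> idx" where
  "tg W1 W2 = W3" | "tg W2 W1 = W3" | "tg W1 W3 = W2" | "tg W3 W1 = W2" | "tg W2 W3 = W1" | "tg W3 W2 = W1"
| "tg E1 X = X" | "tg X E1 = X" | "tg W1 X = X1" | "tg X W1 = X1" | "tg W2 X = X2" | "tg X W2 = X2"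
| "tg W3 X = X3" | "tg X W3 = X3"
| "tg W1 X1 = X" | "tg X1 W1 = X" | "tg W2 X2 = X" | "tg X2 W2 = X" | "tg W3 X3 = X" | "tg X3 W3 = X"
| "tg X X = E1" | "tg X X1 = W1" | "tg X1 X = W1" | "tg X X2 = W2" | "tg X2 X = W2" | "tg X X3 = W3" | "tg X3 X = W3"
| "tg _ _ = E1"

fun cf :: "('z::comm_ring_1 \<Rightarrow> 'z) \<Rightarrow> idx \<Rightarrow> idx \<Rightarrow> 'z \<Rightarrow> 'z \<Rightarrow> 'z" where
  "cf d W1 W2 f g = - (f * g)" | "cf d W2 W1 f g = f * g" | "cf d W1 W3 f g = - (f * g)" | "cf d W3 W1 f g = f * g"
| "cf d W2 W3 f g = f * g" | "cf d W3 W2 f g = - (f * g)"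
| "cf d E1 X f g = d f * g" | "cf d X E1 f g = - (d g * f)"
| "cf d W1 X f g = f * g" | "cf d X W1 f g = - (f * g)" | "cf d W2 X f g = f * g" | "cf d X W2 f g = - (f * g)"
| "cf d W3 X f g = f * g" | "cf d X W3 f g = - (f * g)"
| "cf d W1 X1 f g = f * g" | "cf d X1 W1 f g = - (f * g)" | "cf d W2 X2 f g = f * g" | "cf d X2 W2 f g = - (f * g)"
| "cf d W3 X3 f g = - (f * g)" | "cf d X3 W3 f g = f * g"
| "cf d X X f g = f * g" | "cf d X X1 f g = f * g" | "cf d X1 X f g = f * g" | "cf d X X2 f g = f * g"
| "cf d X2 X f g = f * g" | "cf d X X3 f g = f * g" | "cf d X3 X f g = f * g"
| "cf d _ _ f g = 0"

lemma is_odd_el_sv: "is_odd_el (sv p f) \<longleftrightarrow> f = 0 \<or> odd_idx p"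
  by (auto simp: is_odd_el_def)

lemma homog_sv: "homog (sv p f)"
  by (cases p) (auto simp: homog_def is_odd_el_def is_even_el_def odd_idx_def)

lemma homog_parity:
  assumes "homog a" "a p \<noteq> 0" shows "is_odd_el a \<longleftrightarrow> odd_idx p"
  using assms by (auto simp: homog_def is_odd_el_def is_even_el_def)

locale jck =
  fixes s :: "'a::field \<Rightarrow> 'z::comm_ring_1 \<Rightarrow> 'z" and d :: "'z \<Rightarrow> 'z"
  assumes vs: "vector_space s"
    and alg: "\<And>c x y. s c (x * y) = s c x * y"
    and lin: "Vector_Spaces.linear s s d"
    and leib: "\<And>x y. d (x * y) = d x * y + x * d y"
begin

sublocale Z: vector_space s by (rule vs)

lemma d_hom: "module_hom s s d" using lin by (simp add: module_hom_iff_linear)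
lemma d_add [simp]: "d (x + y) = d x + d y" using module_hom.add[OF d_hom] .
lemma d_zero [simp]: "d 0 = 0" using module_hom.zero[OF d_hom] .
lemma d_neg [simp]: "d (- x) = - d x" using module_hom.neg[OF d_hom] .
lemma d_diff [simp]: "d (x - y) = d x - d y" using module_hom.diff[OF d_hom] .
lemma d_one [simp]: "d 1 = 0" using leib[of 1 1] by simp
lemma d_scale: "d (s c x) = s c (d x)" using module_hom.scale[OF d_hom] .

lemma mult_scale_right: "x * s c y = s c x * y"
  by (metis alg mult.commute)

lemma bp_zero1 [simp]: "bp d p 0 q g = (\<lambda>_. 0)"
  by (cases p; cases q) (simp_all add: fun_eq_iff)
lemma bp_zero2 [simp]: "bp d p f q 0 = (\<lambda>_. 0)"
  by (cases p; cases q) (simp_all add: fun_eq_iff)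

lemma bp_add1: "bp d p (f + f') q g = bp d p f q g + bp d p f' q g"
  by (cases p; cases q) (simp_all add: fun_eq_iff algebra_simps)
lemma bp_add2: "bp d p f q (g + g') = bp d p f q g + bp d p f q g'"
  by (cases p; cases q) (simp_all add: fun_eq_iff algebra_simps)

lemma jmult_sv: "jmult d (sv p f) (sv q g) = bp d p f q g"
proof -
  have "bp d p' (if p' = p then f else 0) q' (if q' = q then g else 0) x
     = (if q' = q then (if p' = p then bp d p f q g x else 0) else 0)" for p' q' x
    by auto
  then show ?thesis unfolding jmult_def fun_eq_iff
    by (simp add: sum.delta cong: if_cong)
qed

lemma jmult_add1: "jmult d (a + a') c = jmult d a c + jmult d a' c"
  by (simp add: jmult_def fun_eq_iff bp_add1 sum.distrib)
lemma jmult_add2: "jmult d a (c + c') = jmult d a c + jmult d a c'"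
  by (simp add: jmult_def fun_eq_iff bp_add2 sum.distrib)

lemma jmult_zero1 [simp]: "jmult d 0 c = 0"
  by (simp add: jmult_def fun_eq_iff zero_fun_def[symmetric])
lemma jmult_zero2 [simp]: "jmult d a 0 = 0"
  by (simp add: jmult_def fun_eq_iff zero_fun_def[symmetric])
lemma jmult_zero2' [simp]: "jmult d a (\<lambda>_. 0) = (\<lambda>_. 0)"
  using jmult_zero2 by (simp add: zero_fun_def)

lemma Dm_additive1: "additive (\<lambda>a. Dm d a b)"
  by unfold_locales (simp add: Dm_def fun_eq_iff jmult_add1 jmult_add2)
lemma Dm_additive2: "additive (Dm d a)"
  by unfold_locales (simp add: Dm_def fun_eq_iff jmult_add1 jmult_add2)
lemma Dm_additive3: "additive (Dm d a b)"
  by unfold_locales (simp add: Dm_def jmult_add2)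
lemma Dp_additive1: "additive (\<lambda>a. Dp d a b)"
  by unfold_locales (simp add: Dp_def fun_eq_iff jmult_add1 jmult_add2)
lemma Dp_additive2: "additive (Dp d a)"
  by unfold_locales (simp add: Dp_def fun_eq_iff jmult_add1 jmult_add2)
lemma Dp_additive3: "additive (Dp d a b)"
  by unfold_locales (simp add: Dp_def jmult_add2)

lemma Dpar_additive: "additive (Dpar d p q a b)"
  by (simp add: Dpar_def Dm_additive3 Dp_additive3)
lemma Dpar_additive_left: "additive (\<lambda>a. Dpar d p q a b)"
  by (simp add: Dpar_def Dm_additive1 Dp_additive1)
lemma Dgen_additive: "additive (Dgen d k u)"
  by (cases k) (simp_all add: Dgen_def Dpar_additive)

lemma Dop_sv: "Dop d (sv p f) (sv q g) = Dpar d p q (sv p f) (sv q g)"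
proof (cases "f = 0 \<or> g = 0")
  case True
  then show ?thesis by (auto simp: Dop_def Dpar_def Dm_def Dp_def fun_eq_iff)
next
  case False
  then show ?thesis by (simp add: Dop_eq Dpar_def is_odd_el_sv)
qed

lemma Dpar_sv_table: "Dpar d p q (sv p f) (sv q g) = Dgen d (tg p q) (cf d p q f g)"
proof (rule additive_eq_on_sv[OF Dpar_additive Dgen_additive])
  fix r h
  show "Dpar d p q (sv p f) (sv q g) (sv r h) = Dgen d (tg p q) (cf d p q f g) (sv r h)"
    by (cases p; cases q; cases r; rule idx_fun_eqI;
        simp add: Dgen_def Dpar_def Dm_def Dp_def odd_idx_def jmult_sv leib algebra_simps)
qed

lemma vector_space_J: "vector_space (scJ s)"
  by unfold_locales (simp_all add: scJ_def fun_eq_iff Z.scale_right_distrib Z.scale_left_distrib)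
lemma vector_space_End: "vector_space (scE s)"
  by unfold_locales (simp_all add: scE_def scJ_def fun_eq_iff Z.scale_right_distrib Z.scale_left_distrib)

sublocale J: vector_space "scJ s" by (rule vector_space_J)
sublocale E: vector_space "scE s" by (rule vector_space_End)

lemma sv_scale: "sv k (s c u) = scJ s c (sv k u)" by (simp add: scJ_def fun_eq_iff)
lemma scJ_zero: "scJ s c (\<lambda>_. 0) = (\<lambda>_. 0)" by (simp add: scJ_def fun_eq_iff)

lemma bp_scale1: "bp d p (s c f) q g = scJ s c (bp d p f q g)"
  by (cases p; cases q)
     (simp_all add: sv_scale[symmetric] scJ_zero d_scale alg mult_scale_right Z.scale_right_diff_distrib)
lemma bp_scale2: "bp d p f q (s c g) = scJ s c (bp d p f q g)"
  by (cases p; cases q)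
     (simp_all add: sv_scale[symmetric] scJ_zero d_scale alg mult_scale_right Z.scale_right_diff_distrib)

lemma jmult_scale1: "jmult d (scJ s c a) b = scJ s c (jmult d a b)"
  by (simp add: jmult_def scJ_def fun_eq_iff Z.scale_sum_right bp_scale1[unfolded scJ_def])
lemma jmult_scale2: "jmult d a (scJ s c b) = scJ s c (jmult d a b)"
  by (simp add: jmult_def scJ_def fun_eq_iff Z.scale_sum_right bp_scale2[unfolded scJ_def])

lemma Dpar_scale: "Dpar d p q (scJ s c a) b = scE s c (Dpar d p q a b)"
  by (simp add: Dpar_def Dm_def Dp_def scE_def fun_eq_iff jmult_scale1 jmult_scale2)
     (simp add: scJ_def Z.scale_right_diff_distrib Z.scale_right_distrib)

lemma Dgen_scale: "Dgen d k (s c u) = scE s c (Dgen d k u)"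
  by (cases k) (simp_all add: Dgen_def sv_scale Dpar_scale)

lemma Dgen_add: "Dgen d k (u + u') = Dgen d k u + Dgen d k u'"
  by (cases k) (simp_all add: Dgen_def sv_add additive.add[OF Dpar_additive_left])

definition Phi :: "(idx \<Rightarrow> 'z) \<Rightarrow> (idx \<Rightarrow> 'z) \<Rightarrow> (idx \<Rightarrow> 'z)"
  where "Phi v = (\<Sum>k\<in>idxs. Dgen d k (v k))"

lemma Phi_hom: "module_hom (scJ s) (scE s) Phi"
  unfolding module_hom_def module_hom_axioms_def module_iff_vector_space
  using vector_space_J vector_space_End
  by (simp add: Phi_def Dgen_add sum.distrib E.scale_sum_right Dgen_scale scJ_def)

lemma Phi_sv: "Phi (sv k u) = Dgen d k u"
proof -
  have "Dgen d j (if j = k then u else 0) = (if j = k then Dgen d k u else 0)" for j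
    using Dgen_add[of j 0 0] by simp
  then show ?thesis by (simp add: Phi_def sum.delta')
qed

text \<open>For homogeneous \<open>a, b\<close> the sign in \<open>D(a,b)\<close> agrees with the sign in every nonzero
  term \<open>D(a_p e_p, b_q e_q)\<close>, so \<open>D\<close> expands biadditively over coordinates.\<close>
lemma Dop_homog_expand:
  assumes a: "homog a" and b: "homog b"
  shows "Dop d a b = (\<Sum>p\<in>idxs. \<Sum>q\<in>idxs. Dop d (sv p (a p)) (sv q (b q)))"
proof -
  define D where "D = (if is_odd_el a \<and> is_odd_el b then Dp d else Dm d)"
  have D_additive: "additive (\<lambda>a'. D a' b')" "additive (D a')" for a' b'
    by (simp_all add: D_def Dm_additive1 Dm_additive2 Dp_additive1 Dp_additive2)
  have terms: "D (sv p (a p)) (sv q (b q)) = Dop d (sv p (a p)) (sv q (b q))" for p q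
  proof (cases "a p = 0 \<or> b q = 0")
    case True
    then show ?thesis by (auto simp: Dop_def D_def Dm_def Dp_def fun_eq_iff)
  next
    case False
    then have "a p \<noteq> 0" "b q \<noteq> 0" by simp_all
    then show ?thesis
      by (simp add: Dop_eq D_def is_odd_el_sv homog_parity[OF a] homog_parity[OF b])
  qed
  have "Dop d a b = D a b" by (simp add: Dop_eq D_def)
  also have "\<dots> = (\<Sum>p\<in>idxs. \<Sum>q\<in>idxs. D (sv p (a p)) (sv q (b q)))"
    by (rule biadditive_expand[OF D_additive])
  finally show ?thesis by (simp add: terms)
qed

lemma range_Phi_subspace: "E.subspace (range Phi)"
  using module_hom.subspace_image[OF Phi_hom J.subspace_UNIV] .

lemma Dop_in_range_Phi:
  assumes "homog a" "homog b" shows "Dop d a b \<in> range Phi"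
proof -
  have "Dop d (sv p f) (sv q g) \<in> range Phi" for p q f g
    unfolding Dop_sv Dpar_sv_table Phi_sv[symmetric] by (rule rangeI)
  then show ?thesis
    by (simp add: Dop_homog_expand[OF assms] E.subspace_sum[OF range_Phi_subspace])
qed

lemma Dgen_in_Inder: "Dgen d k u \<in> Inder s d"
proof -
  obtain p q where "gen_pair k = (p, q)" by fastforce
  then have "Dgen d k u = Dop d (sv p u) (sv q 1)" by (simp add: Dgen_def Dop_sv)
  then show ?thesis unfolding Inder_def using homog_sv by (blast intro: E.span_base)
qed

lemma Phi_range: "range Phi = Inder s d"
proof
  show "range Phi \<subseteq> Inder s d"
    unfolding Phi_def Inder_def by (auto intro!: E.span_sum Dgen_in_Inder[unfolded Inder_def])
  show "Inder s d \<subseteq> range Phi"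
    unfolding Inder_def
    by (rule E.span_minimal[OF _ range_Phi_subspace]) (auto intro: Dop_in_range_Phi)
qed

lemma annihilator_of_spanning_set:
  assumes span: "Z.span S = UNIV" and ann: "\<And>x. x \<in> S \<Longrightarrow> c * x = 0"
  shows "c = 0"
proof -
  have "Z.subspace {z. c * z = 0}"
    unfolding Z.subspace_def by (auto simp: distrib_left mult_scale_right alg[symmetric])
  then have "Z.span S \<subseteq> {z. c * z = 0}" using ann by (intro Z.span_minimal) auto
  then have "c * 1 = 0" using span by blast
  then show "c = 0" by simp
qed

text \<open>Evaluating \<open>Phi(v)\<close> at suitable basis vectors isolates each coordinate of \<open>v\<close>;
  the coordinate at \<open>1\<close> only appears as \<open>2 v_1 \<delta>(h)\<close>, which is where \<open>char F \<noteq> 2\<close>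
  and \<open>Z\<delta>(Z) = Z\<close> enter.\<close>
lemma Phi_injective:
  assumes char: "(2::'a) \<noteq> 0" and ZdZ: "Z.span {f * d g | f g. True} = UNIV"
    and zero: "Phi v = 0"
  shows "v = 0"
proof -
  have vanish: "(\<Sum>j\<in>idxs. Dgen d j (v j) (sv r h) k) = 0" for r h k
    using fun_cong[OF fun_cong[OF zero, of "sv r h"], of k] by (simp add: Phi_def sum_fun_apply)
  note eval = idxs_def Dgen_def Dpar_def Dm_def Dp_def odd_idx_def jmult_sv
  have "v W2 = 0" using vanish[of W1 1 W3] by (simp add: eval)
  moreover have "v W3 = 0" using vanish[of W1 1 W2] by (simp add: eval)
  moreover have "v W1 = 0" using vanish[of W2 1 W3] by (simp add: eval)
  moreover have "v X = 0" using vanish[of W1 1 X1] by (simp add: eval)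
  moreover have "v X1 = 0" using vanish[of W1 1 X] by (simp add: eval)
  moreover have "v X2 = 0" using vanish[of W2 1 X] by (simp add: eval)
  moreover have "v X3 = 0" using vanish[of W3 1 X] by (simp add: eval)
  moreover have "v E1 = 0"
  proof (rule annihilator_of_spanning_set[OF ZdZ])
    have "v E1 * d h + v E1 * d h = 0" for h
      using vanish[of E1 h E1] by (simp add: eval leib algebra_simps)
    then have "v E1 * d h = 0" for h using Z.double_eq_0_imp[OF char] by blast
    then show "v E1 * x = 0" if "x \<in> {f * d g | f g. True}" for x
      using that by (auto simp: mult.left_commute)
  qed
  ultimately show ?thesis by (intro idx_fun_eqI) simp_all
qed

definition coord_basis :: "'z set \<Rightarrow> (idx \<Rightarrow> 'z) set"
  where "coord_basis C = (\<lambda>(k, c). sv k c) ` (idxs \<times> C)"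

lemma sv_hom: "module_hom s (scJ s) (sv k)"
  unfolding module_hom_def module_hom_axioms_def module_iff_vector_space
  using vs vector_space_J by (simp add: sv_add sv_scale)

lemma coord_basis_span:
  assumes "Z.span C = UNIV" shows "J.span (coord_basis C) = UNIV"
proof -
  have "sv k z \<in> J.span (coord_basis C)" for k z
  proof -
    have "sv k z \<in> sv k ` Z.span C" using assms by simp
    also have "\<dots> = J.span (sv k ` C)" using module_hom.span_image[OF sv_hom] by simp
    also have "\<dots> \<subseteq> J.span (coord_basis C)" by (rule J.span_mono) (auto simp: coord_basis_def)
    finally show ?thesis .
  qed
  then have "v \<in> J.span (coord_basis C)" for v
    by (subst sv_decomposition[of v]) (rule J.span_sum)
  then show ?thesis by auto
qed

text \<open>A dependence among the \<open>c e_k\<close> restricts, in coordinate \<open>k\<close>, to one among the \<open>c\<close>.\<close>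
lemma coord_basis_independent:
  assumes ind: "Z.independent C" shows "J.independent (coord_basis C)"
  unfolding J.independent_explicit_module
proof (intro allI impI)
  fix t u v
  assume t: "finite t" "t \<subseteq> coord_basis C" and dep: "(\<Sum>w\<in>t. scJ s (u w) w) = 0" and "v \<in> t"
  then obtain k c0 where v: "v = sv k c0" "c0 \<in> C" by (auto simp: coord_basis_def)
  define T where "T = {c \<in> C. sv k c \<in> t}"
  have inj: "inj (sv k :: 'z \<Rightarrow> _)" by (rule injI) (metis sv_apply)
  have "finite T"
    by (rule finite_subset[OF _ finite_vimageI[OF t(1) inj]]) (auto simp: T_def)
  have "0 = (\<Sum>w\<in>t. scJ s (u w) w) k" using dep by simp
  also have "\<dots> = (\<Sum>w\<in>t. s (u w) (w k))" by (simp add: sum_fun_apply scJ_def)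
  also have "\<dots> = (\<Sum>w\<in>sv k ` T. s (u w) (w k))"
  proof (rule sum.mono_neutral_right[OF t(1)])
    show "sv k ` T \<subseteq> t" by (auto simp: T_def)
    show "\<forall>w\<in>t - sv k ` T. s (u w) (w k) = 0"
    proof
      fix w assume w: "w \<in> t - sv k ` T"
      then obtain k' c where wc: "w = sv k' c" "c \<in> C" using t(2) by (auto simp: coord_basis_def)
      with w have "k' \<noteq> k" by (auto simp: T_def)
      with wc show "s (u w) (w k) = 0" by simp
    qed
  qed
  also have "\<dots> = (\<Sum>c\<in>T. s (u (sv k c)) c)"
    by (subst sum.reindex) (auto intro: inj_on_subset[OF inj])
  finally have "(\<Sum>c\<in>T. s (u (sv k c)) c) = 0" by simp
  moreover have "T \<subseteq> C" "c0 \<in> T" using \<open>v \<in> t\<close> v by (auto simp: T_def)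
  ultimately have "u (sv k c0) = 0"
    using Z.independentD[OF ind \<open>finite T\<close>, of "\<lambda>c. u (sv k c)"] by blast
  with v show "u v = 0" by simp
qed

lemma coord_basis_eqpoll:
  assumes "0 \<notin> C" shows "coord_basis C \<approx> idxs \<times> C"
  unfolding coord_basis_def
proof (rule inj_on_image_eqpoll_self, rule inj_onI, clarify)
  fix k c k' c' assume "c \<in> C" "c' \<in> C" and "sv k c = sv k' c'"
  then have "c = (if k = k' then c' else 0)" by (metis sv_apply)
  with assms \<open>c \<in> C\<close> \<open>c' \<in> C\<close> show "k = k' \<and> c = c'" by (auto split: if_splits)
qed

end

theorem corollary4p5:
  fixes s :: "'a::field \<Rightarrow> 'z::comm_ring_1 \<Rightarrow> 'z"
    and d :: "'z \<Rightarrow> 'z"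
    and B :: "((idx \<Rightarrow> 'z) \<Rightarrow> (idx \<Rightarrow> 'z)) set"
    and BJ :: "(idx \<Rightarrow> 'z) set"
    and C :: "'z set"
  assumes vs: "vector_space s"
    and alg: "\<And>c x y. s c (x * y) = s c x * y"
    and char: "(2::'a) \<noteq> 0"
    and lin: "Vector_Spaces.linear s s d"
    and leib: "\<And>x y. d (x * y) = d x * y + x * d y"
    and ZdZ: "module.span s {f * d g | f g. True} = UNIV"
    and bB: "is_basis_of (scE s) (Inder s d) B"
    and bJ: "is_basis_of (scJ s) UNIV BJ"
    and bC: "is_basis_of s UNIV C"
  shows "B \<approx> BJ \<and> BJ \<approx> ({0..<8::nat} \<times> C)"
proof -
  interpret jck s d by (rule jck.intro[OF vs alg lin leib])
  from bB have B: "E.independent B" "E.span B = Inder s d" by (auto simp: is_basis_of_def)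
  from bJ have BJ: "J.independent BJ" "J.span BJ = UNIV" by (auto simp: is_basis_of_def)
  from bC have C: "Z.independent C" "Z.span C = UNIV" by (auto simp: is_basis_of_def)
  text \<open>Phi is an isomorphism \<open>J \<cong> Inder(J)\<close>, so it maps the basis BJ to a basis of \<open>Inder(J)\<close>.\<close>
  have inj: "inj Phi" using module_hom.inj_iff_eq_0[OF Phi_hom] Phi_injective[OF char ZdZ] by blast
  have "E.independent (Phi ` BJ)"
    using module_hom.independent_injective_image[OF Phi_hom BJ(1)] inj by (simp add: inj_on_subset)
  moreover have "E.span (Phi ` BJ) = E.span B"
    using module_hom.span_image[OF Phi_hom, of BJ] BJ(2) Phi_range B(2) by simp
  ultimately have "B \<approx> Phi ` BJ" using E.independent_same_span_eqpoll B(1) by blast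
  also have "Phi ` BJ \<approx> BJ" by (rule inj_on_image_eqpoll_self[OF inj_on_subset[OF inj]]) simp
  finally have "B \<approx> BJ" .
  have "BJ \<approx> coord_basis C"
    using coord_basis_independent[OF C(1)] coord_basis_span[OF C(2)] BJ
    by (intro J.independent_same_span_eqpoll) simp_all
  also have "\<dots> \<approx> idxs \<times> C" using coord_basis_eqpoll Z.dependent_zero C(1) by blast
  also have "idxs \<times> C \<approx> {0..<8::nat} \<times> C"
    by (rule times_eqpoll_cong) (simp_all add: eqpoll_iff_card idxs_def)
  finally show ?thesis using \<open>B \<approx> BJ\<close> by blast
qed

end
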